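(* \[\inf_{F\in\Delta_{L^1}(\mathbb{R}_+)}\ \sup_{p\in\mathbb{R}_+}\frac{\mathsf{W}(p,F)}{\mathsf{OPT\text{-}W}(F)}\ \ge\ \frac{2+\sqrt2}{4}.\]
   Context: Symmetric bilateral trade: $B,S$ i.i.d. with distribution $F$; posting price $p$, trade iff $B>p\ge S$. $\mathsf{W}(p,F)=\mathbb{E}[S]+\mathbb{E}[(B-S)\mathbf 1_{B>p\ge S}]$, $\mathsf{OPT\text{-}W}(F)=\mathbb{E}[\max\{B,S\}]$. $\Delta_{L^1}(\mathbb{R}_+)$ denotes probability distributions on $[0,\infty)$ with finite, nonzero mean. *)

theory Defs
  imports "HOL-Probability.Probability"
begin

definition dist_L1_pos :: "real measure \<Rightarrow> bool" where
  "dist_L1_pos F \<longleftrightarrow> prob_space F \<and> sets F = sets borel \<and>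
     (AE x in F. 0 \<le> x) \<and> integrable F (\<lambda>x. x) \<and> (\<integral>x. x \<partial>F) \<noteq> 0"

text \<open>B, S i.i.d. with distribution F: the pair (B,S) has law F x F.
  W(p,F) = E[S] + E[(B - S) 1{B > p >= S}].\<close>
definition W :: "real \<Rightarrow> real measure \<Rightarrow> real" where
  "W p F = (\<integral>s. s \<partial>F) +
     (\<integral>z. (fst z - snd z) * indicator {z. p < fst z \<and> snd z \<le> p} z \<partial>(F \<Otimes>\<^sub>M F))"

definition OPT_W :: "real measure \<Rightarrow> real" where
  "OPT_W F = (\<integral>z. max (fst z) (snd z) \<partial>(F \<Otimes>\<^sub>M F))"

end

(* Post the mean m = E X as price. Since E (X - m)^+ = E (m - X)^+ =: e, the welfare at m is
   exactly m + e. To compare with E max(B, S), write U = (m - .)^+ and P = (. - m)^+; for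
   b, s >= 0 the constants c = (2 + sqrt 2)/4, k = sqrt 2 - 1 give a pointwise bound of
   c (max b s + U b U s / m - k (U b + U s) + k^2 m) by a combination of b, s, P and U that
   is linear in each variable. Integrating against F x F, independence turns U(B) U(S) into
   e^2, so c (OPT + (e - k m)^2 / m) <= m + e, whence c OPT <= W(m). *)

theory Submission
  imports Defs
begin

lemma (in pair_sigma_finite) integrable_product_mult:
  fixes f g :: "_ \<Rightarrow> real"
  assumes f: "integrable M1 f" and g: "integrable M2 g"
  shows "integrable (M1 \<Otimes>\<^sub>M M2) (\<lambda>z. f (fst z) * g (snd z))"
proof (rule Fubini_integrable)
  show "(\<lambda>z. f (fst z) * g (snd z)) \<in> borel_measurable (M1 \<Otimes>\<^sub>M M2)"
    using f g by measurable
  have "(\<lambda>x. \<integral>y. norm (f (fst (x, y)) * g (snd (x, y))) \<partial>M2) = (\<lambda>x. \<bar>f x\<bar> * (\<integral>y. \<bar>g y\<bar> \<partial>M2))"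
    by (simp add: abs_mult)
  then show "integrable M1 (\<lambda>x. \<integral>y. norm (f (fst (x, y)) * g (snd (x, y))) \<partial>M2)"
    using f by simp
  show "AE x in M1. integrable M2 (\<lambda>y. f (fst (x, y)) * g (snd (x, y)))"
    using g by simp
qed

lemma (in pair_sigma_finite) integral_product_mult:
  fixes f g :: "_ \<Rightarrow> real"
  assumes f: "integrable M1 f" and g: "integrable M2 g"
  shows "(\<integral>z. f (fst z) * g (snd z) \<partial>(M1 \<Otimes>\<^sub>M M2)) = integral\<^sup>L M1 f * integral\<^sup>L M2 g"
  using integral_fst'[OF integrable_product_mult[OF f g]] by simp

context pair_prob_space
begin

lemma integrable_fst_comp: "integrable M1 f \<Longrightarrow> integrable (M1 \<Otimes>\<^sub>M M2) (\<lambda>z. f (fst z) :: real)"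
  using integrable_product_mult[of f "\<lambda>_. 1"] by simp

lemma integral_fst_comp: "integrable M1 f \<Longrightarrow> (\<integral>z. f (fst z) \<partial>(M1 \<Otimes>\<^sub>M M2)) = (integral\<^sup>L M1 f :: real)"
  using integral_product_mult[of f "\<lambda>_. 1"] by (simp add: M2.prob_space)

lemma integrable_snd_comp: "integrable M2 f \<Longrightarrow> integrable (M1 \<Otimes>\<^sub>M M2) (\<lambda>z. f (snd z) :: real)"
  using integrable_product_mult[of "\<lambda>_. 1" f] by simp

lemma integral_snd_comp: "integrable M2 f \<Longrightarrow> (\<integral>z. f (snd z) \<partial>(M1 \<Otimes>\<^sub>M M2)) = (integral\<^sup>L M2 f :: real)"
  using integral_product_mult[of "\<lambda>_. 1" f] by (simp add: M1.prob_space)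

end

lemma max_pair_bound:
  fixes b s m :: real
  assumes b: "0 \<le> b" and s: "0 \<le> s" and m: "0 < m"
  defines "U \<equiv> \<lambda>x. max 0 (m - x)" and "P \<equiv> \<lambda>x. max 0 (x - m)" and "k \<equiv> sqrt 2 - 1"
  shows "(2 + sqrt 2) / 4 * (max b s + U b * U s / m - k * (U b + U s) + k\<^sup>2 * m)
           \<le> (b + s) / 2 + sqrt 2 / 4 * (P b + P s) + (2 - sqrt 2) / 4 * (U b + U s)"
proof -
  define r where "r = sqrt 2"
  define c where "c = (2 + r) / 4"
  have r2: "r * r = 2" and rr: "r * (r * x) = 2 * x" for x
    unfolding r_def by (simp_all flip: mult.assoc)
  \<comment> \<open>The constants are chosen to make this identity exact; afterwards only U b, U s \<in> [0, m] is used.\<close>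
  have slack: "(b + s) / 2 + r / 4 * (P b + P s) + (2 - r) / 4 * (U b + U s) - c * max b s
      = c * (max 0 (min b s - m) + min (U b) (U s) - k * (U b + U s) + k\<^sup>2 * m)"
    using r2 unfolding U_def P_def c_def k_def r_def[symmetric]
    by (cases "b \<le> m"; cases "s \<le> m"; cases "b \<le> s")
      (simp_all add: max_def min_def field_simps power2_eq_square rr)
  have "u * v \<le> min u v * m" if "0 \<le> u" "u \<le> m" "0 \<le> v" "v \<le> m" for u v
    using mult_left_mono[of v m u] mult_right_mono[of u m v] that by (simp add: min_def mult.commute)
  then have "U b * U s \<le> min (U b) (U s) * m"
    using b s m unfolding U_def by simp
  then have "U b * U s / m \<le> min (U b) (U s)"
    by (simp only: pos_divide_le_eq[OF m])
  then have "U b * U s / m \<le> max 0 (min b s - m) + min (U b) (U s)"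
    by linarith
  moreover have "0 < c" unfolding c_def r_def by (simp add: add_pos_nonneg)
  ultimately have "c * (max b s + U b * U s / m - k * (U b + U s) + k\<^sup>2 * m)
      \<le> c * max b s + c * (max 0 (min b s - m) + min (U b) (U s) - k * (U b + U s) + k\<^sup>2 * m)"
    by (simp add: distrib_left[symmetric] mult_left_mono)
  also have "\<dots> = (b + s) / 2 + r / 4 * (P b + P s) + (2 - r) / 4 * (U b + U s)"
    using slack by linarith
  finally show ?thesis unfolding c_def r_def .
qed

locale integrable_real_distribution = real_distribution +
  assumes integrable_id [simp]: "integrable M (\<lambda>x. x)"
begin

sublocale pair: pair_prob_space M M ..

lemma integrable_pos_part [simp]: "integrable M (\<lambda>x. max 0 (x - q))"
  and integrable_neg_part [simp]: "integrable M (\<lambda>x. max 0 (q - x))"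
  by auto

lemma trade_gain_split:
  "(fst z - snd z) * indicator {z. q < fst z \<and> snd z \<le> q} z
     = max 0 (fst z - q) * indicator {..q} (snd z) + indicator {q<..} (fst z) * max 0 (q - snd z)"
  for z :: "real \<times> real"
  by (auto simp: indicator_def max_def)

lemma
  shows integrable_trade_gain:
    "integrable (M \<Otimes>\<^sub>M M) (\<lambda>z. (fst z - snd z) * indicator {z. q < fst z \<and> snd z \<le> q} z)"
  and W_eq:
    "W q M = expectation (\<lambda>x. x) + expectation (\<lambda>x. max 0 (x - q)) * prob {..q}
            + prob {q<..} * expectation (\<lambda>x. max 0 (q - x))"
proof -
  have ind: "integrable M (indicator A :: real \<Rightarrow> real)" if "A \<in> sets borel" for A
    using that by (intro integrable_real_indicator) (auto simp: emeasure_eq_measure)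
  note below = pair.integrable_product_mult[of "\<lambda>x. max 0 (x - q)" "indicator {..q}"]
    pair.integral_product_mult[of "\<lambda>x. max 0 (x - q)" "indicator {..q}"]
  note above = pair.integrable_product_mult[of "indicator {q<..}" "\<lambda>x. max 0 (q - x)"]
    pair.integral_product_mult[of "indicator {q<..}" "\<lambda>x. max 0 (q - x)"]
  show "integrable (M \<Otimes>\<^sub>M M) (\<lambda>z. (fst z - snd z) * indicator {z. q < fst z \<and> snd z \<le> q} z)"
    unfolding trade_gain_split using below above ind by simp
  show "W q M = expectation (\<lambda>x. x) + expectation (\<lambda>x. max 0 (x - q)) * prob {..q}
            + prob {q<..} * expectation (\<lambda>x. max 0 (q - x))"
    unfolding W_def trade_gain_split using below above ind by simp
qed

lemma integrable_max_pair [simp]: "integrable (M \<Otimes>\<^sub>M M) (\<lambda>z. max (fst z) (snd z))"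
  using pair.integrable_fst_comp[of "\<lambda>x. x"] pair.integrable_snd_comp[of "\<lambda>x. x"] by auto

lemma W_le_OPT_W: "W q M \<le> OPT_W M"
proof -
  have "W q M = (\<integral>z. snd z + (fst z - snd z) * indicator {z. q < fst z \<and> snd z \<le> q} z \<partial>(M \<Otimes>\<^sub>M M))"
    unfolding W_def using pair.integrable_snd_comp[of "\<lambda>x. x"] pair.integral_snd_comp[of "\<lambda>x. x"]
      integrable_trade_gain by simp
  also have "\<dots> \<le> OPT_W M"
    unfolding OPT_W_def using pair.integrable_snd_comp[of "\<lambda>x. x"] integrable_trade_gain
    by (intro integral_mono) (auto simp: indicator_def)
  finally show ?thesis .
qed

lemma mean_le_OPT_W: "expectation (\<lambda>x. x) \<le> OPT_W M"
  unfolding OPT_W_def pair.integral_snd_comp[of "\<lambda>x. x", symmetric, OF integrable_id]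
  using pair.integrable_snd_comp[of "\<lambda>x. x"] by (intro integral_mono) auto

lemma expectation_pos_part_eq_neg_part:
  defines "m \<equiv> expectation (\<lambda>x. x)"
  shows "expectation (\<lambda>x. max 0 (x - m)) = expectation (\<lambda>x. max 0 (m - x))"
proof -
  have "expectation (\<lambda>x. max 0 (x - m)) - expectation (\<lambda>x. max 0 (m - x))
      = expectation (\<lambda>x. max 0 (x - m) - max 0 (m - x))"
    by (rule Bochner_Integration.integral_diff[symmetric]) auto
  also have "\<dots> = expectation (\<lambda>x. x - m)"
    by (rule Bochner_Integration.integral_cong) auto
  also have "\<dots> = 0"
    using prob_space by (simp add: m_def)
  finally show ?thesis by simp
qed

lemma W_at_mean:
  defines "m \<equiv> expectation (\<lambda>x. x)"
  shows "W m M = m + expectation (\<lambda>x. max 0 (m - x))"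
proof -
  have "prob {..m} + prob {m<..} = 1"
    using prob_compl[of "{..m}"] by (simp add: Compl_eq_Diff_UNIV[symmetric])
  moreover have "W m M = m + expectation (\<lambda>x. max 0 (m - x)) * (prob {..m} + prob {m<..})"
    unfolding W_eq m_def expectation_pos_part_eq_neg_part by (simp add: algebra_simps)
  ultimately show ?thesis by simp
qed

lemma AE_pair_nonneg:
  assumes "AE x in M. 0 \<le> x"
  shows "AE z in M \<Otimes>\<^sub>M M. 0 \<le> fst z \<and> 0 \<le> snd z"
proof (rule pair.AE_pair_measure)
  show "AE x in M. AE y in M. 0 \<le> fst (x, y) \<and> 0 \<le> snd (x, y)"
    using assms by eventually_elim (use assms in simp)
qed measurable

lemma W_at_mean_lower_bound:
  assumes nonneg: "AE x in M. 0 \<le> x" and pos: "0 < expectation (\<lambda>x. x)"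
  shows "(2 + sqrt 2) / 4 * OPT_W M \<le> W (expectation (\<lambda>x. x)) M"
proof -
  define m where "m = expectation (\<lambda>x. x)"
  define U where "U = (\<lambda>x::real. max 0 (m - x))"
  define P where "P = (\<lambda>x::real. max 0 (x - m))"
  define e where "e = expectation U"
  define c where "c = (2 + sqrt 2) / 4"
  define k where "k = sqrt 2 - 1"
  have [simp]: "integrable M U" "integrable M P" "expectation P = e"
    unfolding U_def P_def e_def m_def using expectation_pos_part_eq_neg_part by simp_all
  note marginals = pair.integrable_fst_comp pair.integral_fst_comp
    pair.integrable_snd_comp pair.integral_snd_comp
  note identity_marginals = marginals[of "\<lambda>x. x", simplified]
  note UU = pair.integrable_product_mult[of U U] pair.integral_product_mult[of U U]
  define lower where "lower z = c * (max (fst z) (snd z) + U (fst z) * U (snd z) / m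
      - k * (U (fst z) + U (snd z)) + k\<^sup>2 * m)" for z
  define upper where "upper z = (fst z + snd z) / 2 + sqrt 2 / 4 * (P (fst z) + P (snd z))
      + (2 - sqrt 2) / 4 * (U (fst z) + U (snd z))" for z
  have square: "e * e / m - k * (e + e) + k\<^sup>2 * m = (e - k * m)\<^sup>2 / m"
    using pos by (simp add: m_def field_simps power2_eq_square)
  have "c * OPT_W M \<le> c * OPT_W M + c * ((e - k * m)\<^sup>2 / m)"
    using pos unfolding c_def m_def by (simp add: add_nonneg_nonneg)
  also have "\<dots> = c * (OPT_W M + (e * e / m - k * (e + e) + k\<^sup>2 * m))"
    unfolding square[symmetric] by (rule distrib_left[symmetric])
  also have "\<dots> = integral\<^sup>L (M \<Otimes>\<^sub>M M) lower"
    unfolding lower_def OPT_W_def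
    by (simp add: marginals UU e_def Bochner_Integration.integral_diff pair.prob_space algebra_simps)
  also have "\<dots> \<le> integral\<^sup>L (M \<Otimes>\<^sub>M M) upper"
  proof (rule integral_mono_AE)
    show "integrable (M \<Otimes>\<^sub>M M) lower" "integrable (M \<Otimes>\<^sub>M M) upper"
      unfolding lower_def upper_def by (auto simp: marginals identity_marginals UU)
    show "AE z in M \<Otimes>\<^sub>M M. lower z \<le> upper z"
      using AE_pair_nonneg[OF nonneg] unfolding lower_def upper_def c_def k_def U_def P_def
      by eventually_elim (rule max_pair_bound[OF _ _ pos[folded m_def]]; simp)
  qed
  also have "\<dots> = m + e"
    unfolding upper_def
    by (simp add: marginals identity_marginals m_def e_def[symmetric] algebra_simps add_divide_distrib[symmetric])
  finally have "c * OPT_W M \<le> m + e" .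
  then show ?thesis
    unfolding W_at_mean c_def m_def e_def U_def .
qed

end

lemma integrable_real_distribution_if_dist_L1_pos:
  "dist_L1_pos F \<Longrightarrow> integrable_real_distribution F"
  unfolding dist_L1_pos_def integrable_real_distribution_def integrable_real_distribution_axioms_def
    real_distribution_def real_distribution_axioms_def by simp

lemma dist_L1_pos_return:
  assumes "0 < x"
  shows "dist_L1_pos (return borel x)"
proof -
  have x: "x \<in> space borel" by simp
  have "(\<lambda>y. y) \<in> borel_measurable (return borel x)"
    unfolding measurable_cong_sets[OF sets_return refl] by simp
  moreover have "(\<integral>\<^sup>+y. ennreal (norm y) \<partial>return borel x) < \<infinity>"
    using nn_integral_return[OF x, of "\<lambda>y. ennreal (norm y)"] by simp
  ultimately have "integrable (return borel x) (\<lambda>y. y)"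
    by (rule integrableI_bounded)
  moreover have "AE y in return borel x. 0 \<le> y"
    using assms by (simp add: AE_return[OF x])
  moreover have "(\<integral>y. y \<partial>return borel x) = x"
    by (rule integral_return) simp_all
  ultimately show ?thesis
    using assms prob_space_return[OF x] unfolding dist_L1_pos_def by simp
qed

theorem lemma7:
  shows "(INF F \<in> {F. dist_L1_pos F}. SUP p \<in> {0::real..}. W p F / OPT_W F)
           \<ge> (2 + sqrt 2) / 4"
proof (rule cINF_greatest)
  show "{F. dist_L1_pos F} \<noteq> {}"
    using dist_L1_pos_return[OF zero_less_one] by blast
next
  fix F assume "F \<in> {F. dist_L1_pos F}"
  then have D: "dist_L1_pos F" by simp
  then interpret integrable_real_distribution F
    by (rule integrable_real_distribution_if_dist_L1_pos)
  define m where "m = expectation (\<lambda>x. x)"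
  have nonneg: "AE x in F. 0 \<le> x" and "m \<noteq> 0"
    using D unfolding dist_L1_pos_def m_def by blast+
  moreover have "0 \<le> m"
    unfolding m_def using nonneg by (rule integral_nonneg_AE)
  ultimately have m_pos: "0 < m" by simp
  have OPT_pos: "0 < OPT_W F"
    using m_pos mean_le_OPT_W unfolding m_def by linarith
  show "(2 + sqrt 2) / 4 \<le> (SUP p \<in> {0..}. W p F / OPT_W F)"
  proof (rule cSUP_upper2[where x = m])
    show "bdd_above ((\<lambda>p. W p F / OPT_W F) ` {0..})"
      using W_le_OPT_W OPT_pos by (intro bdd_aboveI2[where M = 1]) simp
    show "m \<in> {0..}" using m_pos by simp
    show "(2 + sqrt 2) / 4 \<le> W m F / OPT_W F"
      using W_at_mean_lower_bound[OF nonneg m_pos[unfolded m_def], folded m_def] OPT_pos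
      by (simp only: pos_le_divide_eq)
  qed
qed

end
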